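(* Fix $\alpha\in(0,\pi/4]$ and let ALG be any deterministic online algorithm. Then $\rho(\mathrm{ALG};\alpha)\ge\rho^*$, where $$\rho^*=\frac{s^*(1+s^* )\sqrt{1-\cos(4\alpha)}}{\sqrt{2(1+(s^* )^4)-4(s^* )^2\cos(4\alpha)}},$$ $$s^*=-\tfrac12\cos(4\alpha)+\tfrac12\sqrt{\cos^2(4\alpha)-\frac{8\sqrt[3]{2}\sin^2(2\alpha)}{h}+\frac{h}{3\sqrt[3]{2}}}+\tfrac12\sqrt{2\cos^2(4\alpha)+\frac{8\sqrt[3]{2}\sin^2(2\alpha)}{h}+\frac{16-8\cos^3(4\alpha)}{4\sqrt{\cos^2(4\alpha)-\frac{8\sqrt[3]{2}\sin^2(2\alpha)}{h}+\frac{h}{3\sqrt[3]{2}}}}-\frac{h}{3\sqrt[3]{2}}},$$ $$h=\sqrt[3]{-108\cos^2(4\alpha)+\sqrt{(108-108\cos^2(4\alpha))^2-4(12\cos(4\alpha)-12)^3}+108}.$$ In particular, ALG cannot obtain a ratio better than $\rho^*$ on all prefixes of the request sequence $X_0=(0,0)$, $X_i=(2(-s)^{i-1},0)$ ($i\ge1$) with $s=s^*$.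
   Context: Online drone coverage on a line. A drone has a fixed half angle-of-view $\alpha\in(0,\pi/2)$. A drone at a point $T=(t_x,t_y)$ with $t_y\ge 0$ covers the segment $[t_x-t_y\tan\alpha,\ t_x+t_y\tan\alpha]$ of the $x$-axis. For a point $X=(x,0)$ its feasibility cone is $\mathrm{FC}(X)=\{(u,v): v\ge 0,\ |u-x|\le v\tan\alpha\}$, and the feasibility cone of a finite set of points is the intersection of their cones. An input is a finite sequence of points $X_0=(0,0),X_1,\dots,X_n$ ($n\ge1$) on the $x$-axis, revealed one at a time. A solution is a sequence of drone positions $P_0=(0,0),P_1,\dots,P_n$ with $P_i\in\mathrm{FC}(X_0,\dots,X_i)$; its cost is $\sum_{i=0}^{n-1}|P_iP_{i+1}|$. A deterministic online algorithm chooses $P_i$ knowing only $X_0,\dots,X_i$ (it does not know $n$). $\mathrm{OPT}(\mathbf X;\alpha)$ is the minimum cost of a solution when the whole input is known in advance. The competitive ratio $\rho(\mathrm{ALG};\alpha)$ is the supremum over inputs of $\mathrm{ALG}(\mathbf X;\alpha)/\mathrm{OPT}(\mathbf X;\alpha)$. *)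

theory Defs
  imports Complex_Main "HOL-Library.Extended_Real"
begin

text \<open>Points of the plane are pairs (x,y); points on the x-axis are given by their x-coordinate.\<close>

definition edist :: "real \<times> real \<Rightarrow> real \<times> real \<Rightarrow> real" where
  "edist p q = sqrt ((fst p - fst q)^2 + (snd p - snd q)^2)"

definition FC :: "real \<Rightarrow> real \<Rightarrow> (real \<times> real) set" where
  "FC \<alpha> x = {(u, v). v \<ge> 0 \<and> \<bar>u - x\<bar> \<le> v * tan \<alpha>}"

definition FCs :: "real \<Rightarrow> real set \<Rightarrow> (real \<times> real) set" where
  "FCs \<alpha> S = (\<Inter>x\<in>S. FC \<alpha> x)"

definition path_cost :: "(nat \<Rightarrow> real \<times> real) \<Rightarrow> nat \<Rightarrow> real" where
  "path_cost P n = (\<Sum>i<n. edist (P i) (P (Suc i)))"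

text \<open>An input X_0 = (0,0), X_1, ..., X_n (n \<ge> 1), as the list of x-coordinates.\<close>
definition is_input :: "real list \<Rightarrow> bool" where
  "is_input xs \<longleftrightarrow> length xs \<ge> 2 \<and> xs ! 0 = 0"

definition is_solution :: "real \<Rightarrow> real list \<Rightarrow> (nat \<Rightarrow> real \<times> real) \<Rightarrow> bool" where
  "is_solution \<alpha> xs P \<longleftrightarrow> P 0 = (0, 0) \<and>
     (\<forall>i < length xs. P i \<in> FCs \<alpha> (set (take (Suc i) xs)))"

definition OPT :: "real \<Rightarrow> real list \<Rightarrow> real" where
  "OPT \<alpha> xs = Inf {path_cost P (length xs - 1) | P. is_solution \<alpha> xs P}"

text \<open>A deterministic online algorithm maps the revealed prefix X_0..X_i (i \<ge> 1)
  to the drone position P_i; P_0 = (0,0) is fixed. It must be feasible.\<close>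
definition online_alg :: "real \<Rightarrow> (real list \<Rightarrow> real \<times> real) \<Rightarrow> bool" where
  "online_alg \<alpha> A \<longleftrightarrow> (\<forall>xs. is_input xs \<longrightarrow> A xs \<in> FCs \<alpha> (set xs))"

definition alg_pos :: "(real list \<Rightarrow> real \<times> real) \<Rightarrow> real list \<Rightarrow> nat \<Rightarrow> real \<times> real" where
  "alg_pos A xs i = (if i = 0 then (0, 0) else A (take (Suc i) xs))"

definition ALG_cost :: "(real list \<Rightarrow> real \<times> real) \<Rightarrow> real list \<Rightarrow> real" where
  "ALG_cost A xs = path_cost (alg_pos A xs) (length xs - 1)"

definition cratio :: "real \<Rightarrow> real \<Rightarrow> ereal" where
  "cratio a b = (if b > 0 then ereal (a / b) else if a > 0 then \<infinity> else 0)"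

definition comp_ratio :: "(real list \<Rightarrow> real \<times> real) \<Rightarrow> real \<Rightarrow> ereal" where
  "comp_ratio A \<alpha> = (SUP xs \<in> {xs. is_input xs}. cratio (ALG_cost A xs) (OPT \<alpha> xs))"

definition adv_seq :: "real \<Rightarrow> nat \<Rightarrow> real list" where
  "adv_seq s n = map (\<lambda>i. if i = 0 then 0 else 2 * (-s) ^ (i - 1)) [0..<Suc n]"

definition h_const :: "real \<Rightarrow> real" where
  "h_const \<alpha> = root 3 (- 108 * (cos (4*\<alpha>))^2
      + sqrt ((108 - 108 * (cos (4*\<alpha>))^2)^2 - 4 * (12 * cos (4*\<alpha>) - 12)^3) + 108)"

definition s_star :: "real \<Rightarrow> real" where
  "s_star \<alpha> = (let c = cos (4*\<alpha>); h = h_const \<alpha>; r = root 3 2;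
      w = sqrt (c^2 - 8 * r * (sin (2*\<alpha>))^2 / h + h / (3 * r))
    in - c / 2 + w / 2
       + sqrt (2 * c^2 + 8 * r * (sin (2*\<alpha>))^2 / h + (16 - 8 * c^3) / (4 * w) - h / (3 * r)) / 2)"

definition rho_star :: "real \<Rightarrow> real" where
  "rho_star \<alpha> = (let s = s_star \<alpha>; c = cos (4*\<alpha>) in
      s * (1 + s) * sqrt (1 - c) / sqrt (2 * (1 + s^4) - 4 * s^2 * c))"

end

theory Submission
  imports Defs
begin

text \<open>
  Fix \<open>s > 1\<close> and \<open>t = tan \<alpha>\<close>. Among the first \<open>m + 2\<close> requests \<open>0, 2, -2s, 2s\<^sup>2, \<dots>\<close>
  the last two span an interval containing all the others, so flying straight to the apex of its
  cone costs \<open>s\<^sup>m K\<close> with \<open>K = sqrt ((s - 1)\<^sup>2 + ((s + 1) / t)\<^sup>2)\<close>, an upper bound for OPT.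
  The position of an online algorithm after request \<open>j + 1\<close> sees both \<open>0\<close> and \<open>2(-s)\<^sup>j\<close>;
  in signed and scaled coordinates this reads \<open>x\<^sub>j \<le> y\<^sub>j\<close> and \<open>x\<^sub>j + y\<^sub>j \<ge> 2s\<^sup>j\<close>.
  A potential that changes along every step by a linear functional of norm
  \<open>D = sqrt ((s - 1)\<^sup>2 + t\<^sup>2 (s + 1)\<^sup>2)\<close> of the step is thereby forced to grow; summing it
  with weights \<open>s\<^sup>-\<^sup>j\<close> (Abel summation against the cumulative path lengths) shows that
  an algorithm within factor \<open>\<rho>\<close> of OPT on every prefix needs \<open>2s(s + 1) \<le> \<rho> D K\<close>, and
  \<open>2s(s + 1) / (D K)\<close> is the formula for \<open>\<rho>\<^sup>*\<close>. For \<open>-1 \<le> s \<le> 1\<close> the formula is at most 1,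
  a ratio no algorithm beats on the first request. So the bound holds for every \<open>s \<ge> -1\<close>,
  and of the closed form of \<open>s\<^sup>*\<close> only \<open>s\<^sup>* \<ge> -1\<close> is used.
\<close>

lemma mult_add_mult_le_sqrt_sum_squares:
  fixes a b x y :: real
  shows "a * x + b * y \<le> sqrt (a^2 + b^2) * sqrt (x^2 + y^2)"
proof -
  have "(a^2 + b^2) * (x^2 + y^2) = (a*x + b*y)^2 + (a*y - b*x)^2"
    by (simp add: power2_eq_square algebra_simps)
  then have "(a*x + b*y)^2 \<le> (a^2 + b^2) * (x^2 + y^2)"
    by simp
  then have "a*x + b*y \<le> sqrt ((a^2 + b^2) * (x^2 + y^2))"
    by (rule real_le_rsqrt)
  then show ?thesis
    by (simp add: real_sqrt_mult)
qed

lemma path_cost_nonneg: "0 \<le> path_cost P n"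
  by (simp add: path_cost_def edist_def sum_nonneg)

lemma path_cost_jump: "path_cost (\<lambda>i. if i = 0 then p else q) (Suc n) = edist p q"
  by (induction n) (simp_all add: path_cost_def edist_def)

lemma path_cost_mono: "m \<le> n \<Longrightarrow> path_cost P m \<le> path_cost P n"
  unfolding path_cost_def edist_def by (rule sum_mono2) auto

text \<open>
  Here \<open>x j\<close> and \<open>y j\<close> stand for \<open>(-1)\<^sup>j\<close> times the abscissa and \<open>tan \<alpha>\<close> times the
  ordinate of the position after request \<open>j + 1\<close>. The potential is the sum over the steps so far
  of the functional \<open>(u, v) \<mapsto> (-1)\<^sup>k (s - 1) u + (s + 1) v tan \<alpha>\<close> applied to the \<open>k\<close>-th increment.
\<close>
definition zigzag_potential :: "real \<Rightarrow> (nat \<Rightarrow> real) \<Rightarrow> (nat \<Rightarrow> real) \<Rightarrow> nat \<Rightarrow> real" where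
  "zigzag_potential s x y N = (s - 1) * x N + (s + 1) * y N + 2 * (s - 1) * (\<Sum>j<N. x j)"

lemma zigzag_potential_le_path_cost:
  fixes P :: "nat \<Rightarrow> real \<times> real" and s t :: real
  assumes "P 0 = (0, 0)"
    and x: "\<And>j. x j = (-1)^j * fst (P (Suc j))"
    and y: "\<And>j. y j = t * snd (P (Suc j))"
  shows "zigzag_potential s x y N \<le> sqrt ((s - 1)^2 + t^2 * (s + 1)^2) * path_cost P (Suc N)"
proof (induction N)
  case 0
  have "zigzag_potential s x y 0 = (s - 1) * fst (P 1) + ((s + 1) * t) * snd (P 1)"
    by (simp add: zigzag_potential_def x y)
  also have "\<dots> \<le> sqrt ((s - 1)^2 + ((s + 1) * t)^2) * sqrt ((fst (P 1))^2 + (snd (P 1))^2)"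
    by (rule mult_add_mult_le_sqrt_sum_squares)
  finally show ?case
    using assms(1) by (simp add: path_cost_def edist_def power_mult_distrib mult.commute)
next
  case (Suc N)
  let ?u = "\<lambda>i. fst (P i)" and ?v = "\<lambda>i. snd (P i)"
  have "zigzag_potential s x y (Suc N) - zigzag_potential s x y N
      = ((-1)^Suc N * (s - 1)) * (?u (N + 2) - ?u (N + 1)) + ((s + 1) * t) * (?v (N + 2) - ?v (N + 1))"
    by (simp add: zigzag_potential_def x y algebra_simps)
  also have "\<dots> \<le> sqrt (((-1)^Suc N * (s - 1))^2 + ((s + 1) * t)^2)
                   * sqrt ((?u (N + 2) - ?u (N + 1))^2 + (?v (N + 2) - ?v (N + 1))^2)"
    by (rule mult_add_mult_le_sqrt_sum_squares)
  also have "\<dots> = sqrt ((s - 1)^2 + t^2 * (s + 1)^2) * edist (P (Suc N)) (P (Suc (Suc N)))"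
  proof -
    have "((-1::real)^Suc N)^2 = 1"
      by (simp add: power2_eq_square flip: power_mult_distrib)
    then show ?thesis
      by (simp add: edist_def power_mult_distrib power2_commute mult.commute)
  qed
  finally show ?case
    using Suc.IH by (simp add: path_cost_def algebra_simps)
qed

lemma weighted_sum_zigzag_potential:
  fixes s :: real
  assumes "s \<noteq> 0"
  shows "(\<Sum>j<N. zigzag_potential s x y j / s^j)
       = (\<Sum>i<N. ((s + 1) / s^i - 2 * s / s^N) * x i + (s + 1) / s^i * y i)"
proof (induction N)
  case (Suc N)
  have shift: "(\<Sum>i<N. ((s + 1) / s^i - 2 * s / s^Suc N) * x i + (s + 1) / s^i * y i)
      = (\<Sum>i<N. ((s + 1) / s^i - 2 * s / s^N) * x i + (s + 1) / s^i * y i)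
        + 2 * (s - 1) / s^N * (\<Sum>i<N. x i)"
  proof -
    have "(\<Sum>i<N. ((s + 1) / s^i - 2 * s / s^Suc N) * x i + (s + 1) / s^i * y i)
        = (\<Sum>i<N. (((s + 1) / s^i - 2 * s / s^N) * x i + (s + 1) / s^i * y i)
                    + 2 * (s - 1) / s^N * x i)"
      using assms by (intro sum.cong) (auto simp: field_simps)
    then show ?thesis
      by (simp add: sum.distrib sum_distrib_left)
  qed
  have "zigzag_potential s x y N / s^N = 2 * (s - 1) / s^N * (\<Sum>i<N. x i)
      + (((s + 1) / s^N - 2 * s / s^Suc N) * x N + (s + 1) / s^N * y N)"
    using assms by (simp add: zigzag_potential_def field_simps)
  then show ?case
    using Suc.IH shift by simp
qed simp

lemma weighted_sum_zigzag_potential_ge: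
  fixes s :: real
  assumes "s > 1"
    and sum_ge: "\<And>j. 2 * s^j \<le> x j + y j"
    and le: "\<And>j. x j \<le> y j"
  shows "2 * real N * (s + 1) - 2 * s / (s - 1) \<le> (\<Sum>j<N. zigzag_potential s x y j / s^j)"
proof -
  have term_ge: "2 * (s + 1) - 2 * s^Suc i / s^N
      \<le> ((s + 1) / s^i - 2 * s / s^N) * x i + (s + 1) / s^i * y i" if "i < N" for i
  proof -
    have "s^Suc i \<le> s^N"
      using that assms(1) by (intro power_increasing) auto
    also have "\<dots> \<le> (s + 1) * s^N"
      using assms(1) by simp
    finally have coeff: "0 \<le> (s + 1) / s^i - s / s^N"
      using assms(1) by (simp add: field_simps)
    have "2 * (s + 1) - 2 * s^Suc i / s^N = ((s + 1) / s^i - s / s^N) * (2 * s^i)"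
      using assms(1) by (simp add: field_simps)
    also have "\<dots> \<le> ((s + 1) / s^i - s / s^N) * (x i + y i) + s / s^N * (y i - x i)"
      using mult_left_mono[OF sum_ge[of i] coeff] le[of i] assms(1)
      by (simp add: add_increasing2)
    also have "\<dots> = ((s + 1) / s^i - 2 * s / s^N) * x i + (s + 1) / s^i * y i"
      using assms(1) by (simp add: field_simps)
    finally show ?thesis .
  qed
  have "(\<Sum>i<N. s^Suc i) = s * (s^N - 1) / (s - 1)"
    using assms(1) by (simp add: sum_distrib_left[symmetric] sum_gp_strict field_simps)
  then have "(\<Sum>i<N. 2 * s^Suc i / s^N) \<le> 2 * s / (s - 1)"
    using assms(1) by (simp add: sum_divide_distrib[symmetric] sum_distrib_left[symmetric] field_simps)
  then have "2 * real N * (s + 1) - 2 * s / (s - 1) \<le> (\<Sum>i<N. 2 * (s + 1) - 2 * s^Suc i / s^N)"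
    by (simp add: sum_subtractf algebra_simps)
  also have "\<dots> \<le> (\<Sum>i<N. ((s + 1) / s^i - 2 * s / s^N) * x i + (s + 1) / s^i * y i)"
    by (intro sum_mono term_ge) simp
  finally show ?thesis
    using assms(1) by (simp add: weighted_sum_zigzag_potential)
qed

lemma zigzag_cost_lower_bound:
  fixes P :: "nat \<Rightarrow> real \<times> real" and s t E :: real
  assumes "s > 1" and "P 0 = (0, 0)"
    and x: "\<And>j. x j = (-1)^j * fst (P (Suc j))"
    and y: "\<And>j. y j = t * snd (P (Suc j))"
    and sum_ge: "\<And>j. 2 * s^j \<le> x j + y j"
    and le: "\<And>j. x j \<le> y j"
    and cost: "\<And>m. path_cost P (m + 2) \<le> E * s^m"
  shows "2 * s * (s + 1) \<le> sqrt ((s - 1)^2 + t^2 * (s + 1)^2) * E"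
proof -
  define D where "D = sqrt ((s - 1)^2 + t^2 * (s + 1)^2)"
  have pot_le: "zigzag_potential s x y j / s^j \<le> D * path_cost P (Suc j) / s^j" for j
    using zigzag_potential_le_path_cost[OF assms(2) x y] assms(1)
    by (simp add: D_def divide_right_mono)
  have first: "D * path_cost P 1 \<le> D * E"
    using path_cost_mono[of 1 2 P] cost[of 0] unfolding D_def
    by (intro mult_left_mono) (simp_all add: numeral_2_eq_2)
  have later: "D * path_cost P (Suc (Suc i)) / s^Suc i \<le> D * E / s" for i
  proof -
    have "D * path_cost P (Suc (Suc i)) \<le> D * (E * s^i)"
      using cost[of i] by (simp add: D_def mult_left_mono)
    then show ?thesis
      using assms(1) by (simp add: field_simps)
  qed
  have bounded: "real M * (2 * (s + 1) - D * E / s) \<le> D * E + 2 * s / (s - 1) - 2 * (s + 1)" for M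
  proof -
    have "2 * real (Suc M) * (s + 1) - 2 * s / (s - 1) \<le> (\<Sum>j<Suc M. zigzag_potential s x y j / s^j)"
      by (rule weighted_sum_zigzag_potential_ge[OF assms(1) sum_ge le])
    also have "\<dots> \<le> (\<Sum>j<Suc M. D * path_cost P (Suc j) / s^j)"
      by (intro sum_mono pot_le)
    also have "\<dots> = D * path_cost P 1 + (\<Sum>i<M. D * path_cost P (Suc (Suc i)) / s^Suc i)"
      by (subst sum.lessThan_Suc_shift) simp
    also have "\<dots> \<le> D * E + (\<Sum>i<M. D * E / s)"
      using first sum_mono[OF later] by (rule add_mono)
    also have "\<dots> = D * E + real M * (D * E / s)"
      by simp
    finally show ?thesis
      by (simp add: algebra_simps)
  qed
  have "2 * (s + 1) - D * E / s \<le> 0"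
  proof (rule ccontr)
    assume "\<not> ?thesis"
    then obtain M where "D * E + 2 * s / (s - 1) - 2 * (s + 1) < real M * (2 * (s + 1) - D * E / s)"
      using reals_Archimedean3 by force
    with bounded[of M] show False
      by simp
  qed
  then show ?thesis
    using assms(1) by (simp add: D_def field_simps)
qed

lemma cos_quadruple_tan: "cos (4 * x) = 1 - 8 * (tan x)^2 / (1 + (tan x)^2)^2"
proof -
  have "cos (4 * x) = 1 - 2 * (sin (2 * x))^2"
    using cos_double_sin[of "2 * x"] by simp
  then show ?thesis
    by (simp add: sin_tan_half power_divide)
qed

definition ratio_bound :: "real \<Rightarrow> real \<Rightarrow> real" where
  "ratio_bound s c = s * (1 + s) * sqrt (1 - c) / sqrt (2 * (1 + s^4) - 4 * s^2 * c)"

lemma rho_star_eq_ratio_bound: "rho_star \<alpha> = ratio_bound (s_star \<alpha>) (cos (4 * \<alpha>))"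
  by (simp add: rho_star_def ratio_bound_def Let_def)

lemma ratio_bound_le_one:
  assumes "-1 \<le> s" "s \<le> 1" "c \<le> 1"
  shows "ratio_bound s c \<le> 1"
proof -
  define D where "D = 2 * (1 + s^4) - 4 * s^2 * c"
  have D_eq: "D = 2 * (1 - s^2)^2 + 4 * s^2 * (1 - c)"
    by (simp add: D_def power2_eq_square algebra_simps eval_nat_numeral)
  have "(1 + s)^2 \<le> 2^2"
    using assms by (intro power_mono) auto
  then have "s^2 * (1 - c) * (1 + s)^2 \<le> s^2 * (1 - c) * 4"
    using assms by (intro mult_left_mono) auto
  moreover have "(s * (1 + s))^2 * (1 - c) = s^2 * (1 - c) * (1 + s)^2"
    by (simp add: power_mult_distrib)
  moreover have "0 \<le> 2 * (1 - s^2)^2"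
    by simp
  ultimately have "(s * (1 + s))^2 * (1 - c) \<le> D"
    unfolding D_eq by linarith
  then have "sqrt ((s * (1 + s))^2 * (1 - c)) \<le> sqrt D"
    by (rule real_sqrt_le_mono)
  moreover have "s * (1 + s) * sqrt (1 - c) \<le> \<bar>s * (1 + s)\<bar> * sqrt (1 - c)"
    using assms(3) by (intro mult_right_mono) simp_all
  ultimately have "s * (1 + s) * sqrt (1 - c) \<le> sqrt D"
    by (simp add: real_sqrt_mult)
  moreover have "0 \<le> D"
    unfolding D_eq using assms(3) by simp
  ultimately show ?thesis
    unfolding ratio_bound_def D_def[symmetric] by (auto simp: divide_le_eq_1)
qed

lemma ratio_bound_tan_form:
  fixes s t :: real
  assumes "s > 1" and "t > 0"
  shows "ratio_bound s (1 - 8 * t^2 / (1 + t^2)^2)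
       = 2 * s * (s + 1) / (sqrt ((s - 1)^2 + t^2 * (s + 1)^2) * sqrt ((s - 1)^2 + ((s + 1) / t)^2))"
proof -
  define c where "c = 1 - 8 * t^2 / (1 + t^2)^2"
  define T where "T = 1 + t^2"
  define D1 where "D1 = (s - 1)^2 + t^2 * (s + 1)^2"
  define D2 where "D2 = (s + 1)^2 + t^2 * (s - 1)^2"
  define K where "K = (s - 1)^2 + ((s + 1) / t)^2"
  define D where "D = 2 * (1 + s^4) - 4 * s^2 * c"
  have T_pos: "T > 0"
    unfolding T_def by (simp add: add_pos_nonneg)
  have c_eq: "1 - c = 8 * t^2 / T^2"
    by (simp add: c_def T_def)
  have K_eq: "K = D2 / t^2"
    using assms(2) by (simp add: K_def D2_def field_simps power2_eq_square)
  have D1_D2: "D1 * D2 = (s^2 - 1)^2 * T^2 + 16 * s^2 * t^2"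
    by (simp add: D1_def D2_def T_def power2_eq_square algebra_simps)
  have D_eq: "4 * D = 8 * (s^2 - 1)^2 + 16 * s^2 * (1 - c)"
    by (simp add: D_def power2_eq_square algebra_simps eval_nat_numeral)
  have "(1 - c) * D1 * K = 8 * (D1 * D2) / T^2"
    using assms(2) by (simp add: c_eq K_eq field_simps)
  also have "\<dots> = 8 * (s^2 - 1)^2 + 128 * s^2 * t^2 / T^2"
    using T_pos by (simp add: D1_D2 field_simps)
  also have "\<dots> = 4 * D"
    by (subst D_eq) (simp add: c_eq field_simps)
  finally have "sqrt (1 - c) * sqrt D1 * sqrt K = sqrt (2^2) * sqrt D"
    by (simp only: real_sqrt_mult[symmetric]) simp
  then have sqrt_D: "sqrt D = sqrt (1 - c) * sqrt D1 * sqrt K / 2"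
    by (simp only: real_sqrt_abs)
  moreover have "0 < 1 - c" "0 < D1" "0 < K"
    using assms T_pos by (auto simp: c_eq D1_def K_def add_pos_nonneg)
  ultimately show ?thesis
    unfolding ratio_bound_def c_def[symmetric] D_def[symmetric] sqrt_D D1_def[symmetric] K_def[symmetric]
    by (simp add: field_simps)
qed

lemma s_star_ge: "s_star \<alpha> \<ge> -1/2"
proof -
  define c where "c = cos (4 * \<alpha>)"
  define h where "h = h_const \<alpha>"
  define r where "r = root 3 (2::real)"
  define Y where "Y = h / (3 * r) - 8 * r * (sin (2 * \<alpha>))^2 / h"
  have c_bounds: "-1 \<le> c" "c \<le> 1"
    by (simp_all add: c_def)
  have sin_sq: "(sin (2 * \<alpha>))^2 = (1 - c) / 2"
    using cos_double_sin[of "2 * \<alpha>"] by (simp add: c_def)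
  define Z where "Z = (108 - 108 * c^2)^2 - 4 * (12 * c - 12)^3"
  have Z_eq: "Z = (108 - 108 * c^2)^2 + 6912 * (1 - c)^3"
    by (simp add: Z_def power3_eq_cube algebra_simps)
  define X where "X = - 108 * c^2 + sqrt Z + 108"
  have "c^2 \<le> 1"
    using c_bounds by (simp add: abs_square_le_1)
  then have sqrt_Z_le: "sqrt Z \<le> X"
    by (simp add: X_def)
  moreover have Z_nonneg: "0 \<le> Z"
    using c_bounds by (simp add: Z_eq)
  ultimately have X_nonneg: "0 \<le> X"
    using real_sqrt_ge_zero order_trans by blast
  have "Z \<le> X^2"
    using power_mono[OF sqrt_Z_le, of 2] Z_nonneg by simp
  then have X_ge: "6912 * (1 - c)^3 \<le> X^2"
    unfolding Z_eq using zero_le_power2[of "108 - 108 * c^2"] by linarith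
  have h_eq: "h = root 3 X"
    by (simp add: h_def h_const_def X_def Z_def c_def)
  have Y_nonneg: "0 \<le> Y"
  proof (cases "h = 0")
    case False
    have h_pos: "h > 0"
      using False X_nonneg by (simp add: h_eq)
    have r_pos: "r > 0" and r3: "r^3 = 2"
      by (simp_all add: r_def)
    have "r^6 = (r^3)^2"
      by (simp flip: power_mult)
    then have r6: "r^6 = 4"
      by (simp add: r3)
    have "(24 * r^2 * (sin (2 * \<alpha>))^2)^3 = 6912 * (1 - c)^3"
      by (simp add: sin_sq power_mult_distrib r6 power_divide flip: power_mult)
    also have "\<dots> \<le> (h^3)^2"
      using X_ge X_nonneg by (simp add: h_eq)
    also have "\<dots> = (h^2)^3"
      by (simp flip: power_mult)
    finally have "24 * r^2 * (sin (2 * \<alpha>))^2 \<le> h^2"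
      by (metis power_le_imp_le_base numeral_3_eq_3 zero_le_power2)
    then show ?thesis
      using h_pos r_pos by (simp add: Y_def field_simps power2_eq_square)
  qed (simp add: Y_def)
  define w where "w = sqrt (c^2 + Y)"
  have w_nonneg: "0 \<le> w"
    using Y_nonneg by (simp add: w_def)
  define Q where "Q = 2 * c^2 - Y + (16 - 8 * c^3) / (4 * w)"
  have "\<bar>c\<bar>^3 \<le> 1"
    using c_bounds by (intro power_le_one) auto
  then have "c^3 \<le> 1"
    by (metis abs_ge_self power_abs order_trans)
  then have "- (c^2 + Y) \<le> Q"
    using w_nonneg by (simp add: Q_def)
  txt \<open>\<open>Q\<close> may be negative: \<open>sqrt\<close> is odd on the reals, so \<open>Q \<ge> -w\<^sup>2\<close> suffices.\<close>
  then have "- w \<le> sqrt Q"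
    unfolding w_def using real_sqrt_le_mono real_sqrt_minus by metis
  moreover have "s_star \<alpha> = - c / 2 + w / 2 + sqrt Q / 2"
    by (simp add: s_star_def Let_def c_def h_def r_def w_def Q_def Y_def algebra_simps)
  ultimately show ?thesis
    using c_bounds by linarith
qed

definition adv_request :: "real \<Rightarrow> nat \<Rightarrow> real" where
  "adv_request s i = (if i = 0 then 0 else 2 * (-s)^(i - 1))"

lemma adv_seq_eq_map: "adv_seq s n = map (adv_request s) [0..<Suc n]"
  by (simp add: adv_seq_def adv_request_def[abs_def])

lemma length_adv_seq [simp]: "length (adv_seq s n) = Suc n"
  by (simp add: adv_seq_eq_map)

lemma take_adv_seq: "i \<le> n \<Longrightarrow> take (Suc i) (adv_seq s n) = adv_seq s i"
  by (simp add: adv_seq_eq_map take_map del: upt_Suc)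

lemma set_adv_seq: "set (adv_seq s n) = adv_request s ` {..n}"
  by (simp add: adv_seq_eq_map atLeast0AtMost atLeastLessThanSuc_atLeastAtMost del: upt_Suc)

lemma is_input_adv_seq: "1 \<le> n \<Longrightarrow> is_input (adv_seq s n)"
  by (simp add: is_input_def adv_seq_eq_map nth_map adv_request_def del: upt_Suc)

lemma OPT_le_path_cost: "is_solution \<alpha> xs P \<Longrightarrow> OPT \<alpha> xs \<le> path_cost P (length xs - 1)"
  unfolding OPT_def by (rule cInf_lower) (auto intro: bdd_belowI[where m = 0] path_cost_nonneg)

lemma alg_pos_is_solution:
  assumes "online_alg \<alpha> A" and "is_input xs"
  shows "is_solution \<alpha> xs (alg_pos A xs)"
  unfolding is_solution_def
proof (intro conjI allI impI)
  fix i assume "i < length xs"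
  show "alg_pos A xs i \<in> FCs \<alpha> (set (take (Suc i) xs))"
  proof (cases "i = 0")
    case True
    with assms(2) have "take (Suc i) xs = [0]"
      by (cases xs) (auto simp: is_input_def)
    with True show ?thesis
      by (simp add: alg_pos_def FCs_def FC_def)
  next
    case False
    with assms(2) \<open>i < length xs\<close> have "is_input (take (Suc i) xs)"
      by (auto simp: is_input_def)
    with assms(1) False show ?thesis
      by (simp add: alg_pos_def online_alg_def)
  qed
qed (simp add: alg_pos_def)

lemma ALG_cost_nonneg: "0 \<le> ALG_cost A xs"
  by (simp add: ALG_cost_def path_cost_nonneg)

lemma OPT_le_ALG_cost: "online_alg \<alpha> A \<Longrightarrow> is_input xs \<Longrightarrow> OPT \<alpha> xs \<le> ALG_cost A xs"
  unfolding ALG_cost_def by (intro OPT_le_path_cost alg_pos_is_solution)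

lemma ALG_cost_adv_seq:
  "ALG_cost A (adv_seq s n) = path_cost (\<lambda>i. if i = 0 then (0, 0) else A (adv_seq s i)) n"
  unfolding ALG_cost_def path_cost_def length_adv_seq
  by (intro sum.cong) (auto simp: alg_pos_def take_adv_seq)

lemma OPT_adv_seq_one_ge:
  assumes "tan \<alpha> > 0"
  shows "1 / tan \<alpha> \<le> OPT \<alpha> (adv_seq s 1)"
  unfolding OPT_def
proof (rule cInf_greatest)
  have "adv_seq s 1 = [0, 2]"
    by (simp add: adv_seq_def)
  then have "is_solution \<alpha> (adv_seq s 1) (\<lambda>i. if i = 0 then (0, 0) else (1, 1 / tan \<alpha>))"
    using assms by (auto simp: is_solution_def FCs_def FC_def less_Suc_eq)
  then show "{path_cost P (length (adv_seq s 1) - 1) |P. is_solution \<alpha> (adv_seq s 1) P} \<noteq> {}"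
    by blast
next
  fix c assume "c \<in> {path_cost P (length (adv_seq s 1) - 1) |P. is_solution \<alpha> (adv_seq s 1) P}"
  then obtain P where P: "is_solution \<alpha> (adv_seq s 1) P" and c: "c = path_cost P 1"
    by auto
  have "P 1 \<in> FC \<alpha> 0" "P 1 \<in> FC \<alpha> 2"
    using P by (auto simp: is_solution_def adv_seq_def FCs_def)
  then have "1 \<le> snd (P 1) * tan \<alpha>"
    by (auto simp: FC_def)
  moreover have "snd (P 1) \<le> c"
    using P by (simp add: c is_solution_def path_cost_def edist_def)
  ultimately show "1 / tan \<alpha> \<le> c"
    using assms by (simp add: divide_le_eq mult.commute order_trans)
qed

text \<open>The last two requests \<open>2(-s)\<^sup>m\<close> and \<open>2(-s)\<^sup>m\<^sup>+\<^sup>1\<close> are the endpoints of the interval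
  with this centre and half-width.\<close>
lemma adv_request_near_apex:
  fixes s :: real
  assumes "s > 1" and "i \<le> m + 2"
  shows "\<bar>(-1)^(m + 1) * s^m * (s - 1) - adv_request s i\<bar> \<le> s^m * (s + 1)"
proof -
  define \<sigma> where "\<sigma> = (-1::real)^(m + 1)"
  have abs_\<sigma>: "\<bar>\<sigma> * z\<bar> = \<bar>z\<bar>" for z
    by (simp add: \<sigma>_def abs_mult power_abs)
  have "s^m > 0"
    using assms(1) by simp
  consider "i = 0" | "i = m + 2" | k where "i = Suc k" "k \<le> m"
    using assms(2) by (cases i) (auto simp: le_Suc_eq)
  then show ?thesis
  proof cases
    case 1
    then show ?thesis
      using assms(1) by (simp add: adv_request_def abs_mult power_abs)
  next
    case 2
    have "(-s)^(m + 1) = \<sigma> * s^(m + 1)"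
      unfolding \<sigma>_def by (rule power_minus)
    then have "\<sigma> * s^m * (s - 1) - adv_request s i = \<sigma> * (- (s^m * (s + 1)))"
      using 2 by (simp add: adv_request_def algebra_simps)
    then show ?thesis
      using abs_\<sigma>[of "- (s^m * (s + 1))"] \<open>s^m > 0\<close> assms(1) by (simp add: \<sigma>_def)
  next
    case (3 k)
    have "\<bar>adv_request s i\<bar> = 2 * s^k"
      using 3 assms(1) by (simp add: adv_request_def abs_mult power_abs)
    also have "\<dots> \<le> 2 * s^m"
      using 3 assms(1) by (simp add: power_increasing)
    finally have "\<bar>\<sigma> * (s^m * (s - 1)) - adv_request s i\<bar> \<le> s^m * (s - 1) + 2 * s^m"
      using abs_\<sigma>[of "s^m * (s - 1)"] \<open>s^m > 0\<close> assms(1) abs_triangle_ineq4 order_trans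
      by fastforce
    then show ?thesis
      by (simp add: \<sigma>_def algebra_simps)
  qed
qed

lemma OPT_adv_seq_le:
  fixes s :: real
  assumes "s > 1" and "tan \<alpha> > 0"
  shows "OPT \<alpha> (adv_seq s (m + 2)) \<le> s^m * sqrt ((s - 1)^2 + ((s + 1) / tan \<alpha>)^2)"
proof -
  define apex where "apex = ((-1)^(m + 1) * s^m * (s - 1), s^m * (s + 1) / tan \<alpha>)"
  define Q where "Q = (\<lambda>i::nat. if i = 0 then (0, 0) else apex)"
  have apex_FC: "apex \<in> FC \<alpha> x" if "x \<in> set (adv_seq s (m + 2))" for x
    using that adv_request_near_apex[OF assms(1)] assms by (auto simp: set_adv_seq apex_def FC_def)
  have "is_solution \<alpha> (adv_seq s (m + 2)) Q"
    unfolding is_solution_def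
  proof (intro conjI allI impI)
    fix i assume "i < length (adv_seq s (m + 2))"
    show "Q i \<in> FCs \<alpha> (set (take (Suc i) (adv_seq s (m + 2))))"
    proof (cases "i = 0")
      case True
      then show ?thesis
        using take_adv_seq[of 0 "m + 2" s] by (simp add: Q_def adv_seq_def FCs_def FC_def)
    next
      case False
      then show ?thesis
        using apex_FC set_take_subset by (fastforce simp: Q_def FCs_def)
    qed
  qed (simp add: Q_def)
  then have "OPT \<alpha> (adv_seq s (m + 2)) \<le> path_cost Q (Suc (Suc m))"
    by (auto dest: OPT_le_path_cost)
  also have "\<dots> = edist (0, 0) apex"
    unfolding Q_def by (rule path_cost_jump)
  also have "\<dots> = sqrt ((s^m * (s - 1))^2 + (s^m * ((s + 1) / tan \<alpha>))^2)"
  proof -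
    have "\<bar>fst apex\<bar> = s^m * (s - 1)"
      using assms(1) by (simp add: apex_def abs_mult power_abs)
    then have "(fst apex)^2 = (s^m * (s - 1))^2"
      by (metis power2_abs)
    moreover have "snd apex = s^m * ((s + 1) / tan \<alpha>)"
      by (simp add: apex_def)
    ultimately show ?thesis
      by (simp add: edist_def)
  qed
  also have "\<dots> = sqrt ((s^m)^2 * ((s - 1)^2 + ((s + 1) / tan \<alpha>)^2))"
    by (simp only: power_mult_distrib distrib_left)
  also have "\<dots> = s^m * sqrt ((s - 1)^2 + ((s + 1) / tan \<alpha>)^2)"
    using assms(1) by (simp add: real_sqrt_mult)
  finally show ?thesis .
qed

lemma FC_abs_le:
  assumes "p \<in> FC \<alpha> a" and "\<bar>\<sigma>\<bar> = 1"
  shows "\<bar>\<sigma> * fst p - \<sigma> * a\<bar> \<le> tan \<alpha> * snd p"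
  using assms by (auto simp: FC_def abs_mult mult.commute simp flip: right_diff_distrib)

lemma cratio_nonneg: "0 \<le> a \<Longrightarrow> 0 \<le> cratio a b"
  by (simp add: cratio_def)

lemma one_le_cratio: "0 < b \<Longrightarrow> b \<le> a \<Longrightarrow> 1 \<le> cratio a b"
  by (simp add: cratio_def one_ereal_def)

lemma le_of_cratio_le:
  assumes "cratio a b \<le> ereal r" and "0 \<le> r" and "b \<le> B" and "0 \<le> B"
  shows "a \<le> r * B"
proof (cases "b > 0")
  case True
  then have "a \<le> r * b"
    using assms(1) by (simp add: cratio_def divide_le_eq mult.commute)
  also have "\<dots> \<le> r * B"
    using assms by (simp add: mult_left_mono)
  finally show ?thesis .
next
  case False
  then have "a \<le> 0"
    using assms(1) by (auto simp: cratio_def split: if_splits)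
  then show ?thesis
    using mult_nonneg_nonneg[OF assms(2,4)] by linarith
qed

lemma ratio_bound_le_of_adv_seq_ratios_le:
  fixes s r :: real
  assumes "tan \<alpha> > 0" and A: "online_alg \<alpha> A" and "s > 1" and "0 \<le> r"
    and ratio_le: "\<And>n. 1 \<le> n \<Longrightarrow> cratio (ALG_cost A (adv_seq s n)) (OPT \<alpha> (adv_seq s n)) \<le> ereal r"
  shows "ratio_bound s (cos (4 * \<alpha>)) \<le> r"
proof -
  define t where "t = tan \<alpha>"
  define K where "K = sqrt ((s - 1)^2 + ((s + 1) / t)^2)"
  define D where "D = sqrt ((s - 1)^2 + t^2 * (s + 1)^2)"
  define P where "P = (\<lambda>i. if i = 0 then (0, 0) else A (adv_seq s i))"
  define x where "x j = (-1)^j * fst (P (Suc j))" for j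
  define y where "y j = t * snd (P (Suc j))" for j
  have cost: "path_cost P (m + 2) \<le> (r * K) * s^m" for m
  proof -
    have "ALG_cost A (adv_seq s (m + 2)) \<le> r * (s^m * K)"
      using le_of_cratio_le[OF ratio_le \<open>0 \<le> r\<close> OPT_adv_seq_le[OF \<open>s > 1\<close> \<open>tan \<alpha> > 0\<close>]]
        \<open>s > 1\<close> by (simp add: K_def t_def)
    then show ?thesis
      by (simp add: ALG_cost_adv_seq P_def algebra_simps)
  qed
  have feasible: "P (Suc j) \<in> FC \<alpha> (adv_request s i)" if "i \<le> Suc j" for i j
  proof -
    have "A (adv_seq s (Suc j)) \<in> FCs \<alpha> (set (adv_seq s (Suc j)))"
      using A is_input_adv_seq[of "Suc j" s] unfolding online_alg_def by simp
    then show ?thesis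
      using that by (simp add: P_def FCs_def set_adv_seq)
  qed
  have abs_x_le: "\<bar>x j\<bar> \<le> y j" for j
    using FC_abs_le[OF feasible[of 0 j], of "(-1)^j"]
    by (simp add: x_def y_def t_def adv_request_def abs_mult power_abs)
  have le: "x j \<le> y j" for j
    using abs_x_le[of j] by simp
  have sum_ge: "2 * s^j \<le> x j + y j" for j
  proof -
    have "(-1::real)^j * (-s)^j = s^j"
      by (simp flip: power_mult_distrib)
    then have "(-1::real)^j * (2 * (-s)^j) = 2 * s^j"
      by (simp add: mult.left_commute)
    then show ?thesis
      using FC_abs_le[OF feasible[of "Suc j" j], of "(-1)^j"]
      by (simp add: x_def y_def t_def adv_request_def abs_mult power_abs abs_le_iff)
  qed
  have "2 * s * (s + 1) \<le> D * (r * K)"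
    unfolding D_def by (rule zigzag_cost_lower_bound[OF \<open>s > 1\<close> _ x_def y_def sum_ge le cost])
      (simp add: P_def)
  moreover have "ratio_bound s (cos (4 * \<alpha>)) = 2 * s * (s + 1) / (D * K)"
    unfolding cos_quadruple_tan D_def K_def t_def
    using ratio_bound_tan_form[OF \<open>s > 1\<close> \<open>tan \<alpha> > 0\<close>] .
  moreover have "0 < D * K"
    using \<open>s > 1\<close> by (simp add: D_def K_def add_pos_nonneg)
  ultimately show ?thesis
    by (simp add: divide_le_eq algebra_simps)
qed

lemma ratio_bound_le_of_first_adv_seq_ratio_le:
  fixes s r :: real
  assumes "tan \<alpha> > 0" and "online_alg \<alpha> A" and "-1 \<le> s" "s \<le> 1"
    and ratio_le: "cratio (ALG_cost A (adv_seq s 1)) (OPT \<alpha> (adv_seq s 1)) \<le> ereal r"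
  shows "ratio_bound s (cos (4 * \<alpha>)) \<le> r"
proof -
  have "0 < OPT \<alpha> (adv_seq s 1)"
    by (rule order_less_le_trans[OF _ OPT_adv_seq_one_ge[OF assms(1)]]) (simp add: assms(1))
  then have "1 \<le> cratio (ALG_cost A (adv_seq s 1)) (OPT \<alpha> (adv_seq s 1))"
    using OPT_le_ALG_cost[OF assms(2) is_input_adv_seq] by (intro one_le_cratio) simp_all
  from order_trans[OF this ratio_le] have "1 \<le> r"
    by (simp add: one_ereal_def)
  then show ?thesis
    using ratio_bound_le_one[OF assms(3,4) cos_le_one[of "4 * \<alpha>"]] by linarith
qed

lemma ratio_bound_le_SUP_adv_seq_ratios:
  fixes s :: real
  assumes "tan \<alpha> > 0" and "online_alg \<alpha> A" and "-1 \<le> s"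
  shows "ereal (ratio_bound s (cos (4 * \<alpha>)))
       \<le> (SUP n \<in> {1..}. cratio (ALG_cost A (adv_seq s n)) (OPT \<alpha> (adv_seq s n)))"
proof (rule ereal_le_real)
  fix r
  assume SUP_le: "(SUP n \<in> {1..}. cratio (ALG_cost A (adv_seq s n)) (OPT \<alpha> (adv_seq s n))) \<le> ereal r"
  have ratio_le: "cratio (ALG_cost A (adv_seq s n)) (OPT \<alpha> (adv_seq s n)) \<le> ereal r" if "1 \<le> n" for n
    using that by (intro order_trans[OF _ SUP_le] SUP_upper) simp
  have "0 \<le> r"
    using order_trans[OF cratio_nonneg[OF ALG_cost_nonneg] ratio_le[of 1]] by simp
  show "ereal (ratio_bound s (cos (4 * \<alpha>))) \<le> ereal r"
  proof (cases "s > 1")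
    case True
    show ?thesis
      using ratio_bound_le_of_adv_seq_ratios_le[OF assms(1,2) True \<open>0 \<le> r\<close> ratio_le] by simp
  next
    case False
    show ?thesis
      using ratio_bound_le_of_first_adv_seq_ratio_le[OF assms(1,2,3) _ ratio_le] False by simp
  qed
qed

theorem theorem4:
  fixes \<alpha> :: real and A :: "real list \<Rightarrow> real \<times> real"
  assumes "0 < \<alpha>" and "\<alpha> \<le> pi / 4" and "online_alg \<alpha> A"
  shows "ereal (rho_star \<alpha>) \<le> comp_ratio A \<alpha>
       \<and> ereal (rho_star \<alpha>) \<le> (SUP n \<in> {1..}. cratio (ALG_cost A (adv_seq (s_star \<alpha>) n))
                                                  (OPT \<alpha> (adv_seq (s_star \<alpha>) n)))"
proof
  have "tan \<alpha> > 0"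
    using assms(1,2) by (intro tan_gt_zero) auto
  moreover have "-1 \<le> s_star \<alpha>"
    using s_star_ge[of \<alpha>] by simp
  ultimately show adversary: "ereal (rho_star \<alpha>) \<le> (SUP n \<in> {1..}. cratio (ALG_cost A (adv_seq (s_star \<alpha>) n))
                                                  (OPT \<alpha> (adv_seq (s_star \<alpha>) n)))"
    unfolding rho_star_eq_ratio_bound using assms(3) by (intro ratio_bound_le_SUP_adv_seq_ratios)
  have "(SUP n \<in> {1..}. cratio (ALG_cost A (adv_seq (s_star \<alpha>) n)) (OPT \<alpha> (adv_seq (s_star \<alpha>) n)))
      \<le> comp_ratio A \<alpha>"
    unfolding comp_ratio_def by (rule SUP_least, rule SUP_upper) (auto intro: is_input_adv_seq)
  with adversary show "ereal (rho_star \<alpha>) \<le> comp_ratio A \<alpha>"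
    by (rule order_trans)
qed

end
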